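(* Consider the hidden Markov model and the procedure $\texttt{VRSO-PE}$ described in the context. Let $\boldsymbol{\phi}^{(0)}\in\boldsymbol{\Phi}$ and let input quantities $\{\widehat{\boldsymbol{\alpha}}^{(0)}_t,\widehat{\boldsymbol{\beta}}^{(0)}_t,\widehat{\boldsymbol{\gamma}}^{(0)}_t,\widehat{\boldsymbol{\xi}}^{(0)}_t\}_{t=1}^T$ be given. Suppose that (1) $\widehat{\boldsymbol{\alpha}}^{(0)}_t=\boldsymbol{\alpha}_t(\boldsymbol{\phi}^{(0)})$ and $\widehat{\boldsymbol{\beta}}^{(0)}_t=\boldsymbol{\beta}_t(\boldsymbol{\phi}^{(0)})$ for all $t=1,\ldots,T$; (2) $\widehat{\boldsymbol{\gamma}}^{(0)}_t=\boldsymbol{\gamma}_t(\boldsymbol{\phi}^{(0)})$ and $\widehat{\boldsymbol{\xi}}^{(0)}_t=\boldsymbol{\xi}_t(\boldsymbol{\phi}^{(0)})$ for all $t=1,\ldots,T$; (3) $\nabla F\big(\boldsymbol{\phi}^{(0)}\mid \boldsymbol{\gamma}(\boldsymbol{\phi}^{(0)}),\boldsymbol{\xi}(\boldsymbol{\phi}^{(0)})\big)=0$. Then, with probability 1, $$\texttt{VRSO-PE}\Big(\{\widehat{\boldsymbol{\alpha}}^{(0)}_t,\widehat{\boldsymbol{\beta}}^{(0)}_t,\widehat{\boldsymbol{\gamma}}^{(0)}_t,\widehat{\boldsymbol{\xi}}^{(0)}_t\}_{t=1}^T,\ \boldsymbol{\phi}^{(0)},\ \lambda,\ A,\ P,\ M\Big)=\boldsymbol{\phi}^{(0)}$$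 for all step sizes $\lambda\in\mathbb{R}$, all $A\in\{\mathrm{SAGA},\mathrm{SVRG}\}$, all $P\in\{\texttt{True},\texttt{False}\}$ and all $M\in\mathbb{N}$.
   Context: Setting (hidden Markov model). Observations $\mathbf{y}=(y_1,\ldots,y_T)$; $N$ hidden states; parameter $\boldsymbol{\phi}=(\boldsymbol{\theta},\boldsymbol{\eta})\in\boldsymbol{\Phi}$. The initial distribution is a row vector $\boldsymbol{\delta}(\boldsymbol{\eta})$, the transition matrix is $\boldsymbol{\Gamma}(\boldsymbol{\eta})$ (entries $\Gamma_{ij}$), and $P(y;\boldsymbol{\theta})=\mathrm{diag}\big(f^{(1)}(y;\boldsymbol{\theta}),\ldots,f^{(N)}(y;\boldsymbol{\theta})\big)$ collects the state-dependent emission densities; all these are positive and differentiable in $\boldsymbol{\phi}$. Forward/backward quantities (row vectors): $\boldsymbol{\alpha}_1(\boldsymbol{\phi})=\boldsymbol{\delta}(\boldsymbol{\eta})P(y_1;\boldsymbol{\theta})$, $\boldsymbol{\alpha}_t(\boldsymbol{\phi})=\boldsymbol{\alpha}_{t-1}(\boldsymbol{\phi})\boldsymbol{\Gamma}(\boldsymbol{\eta})P(y_t;\boldsymbol{\theta})$ for $t\ge 2$; $\boldsymbol{\beta}_T(\boldsymbol{\phi})=\mathbf{1}$, $\boldsymbol{\beta}_t(\boldsymbol{\phi})^\top=\boldsymbol{\Gamma}(\boldsymbol{\eta})P(y_{t+1};\boldsymbol{\theta})\boldsymbol{\beta}_{t+1}(\boldsymbol{\phi})^\top$ for $t<T$.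 Write $\widetilde{\boldsymbol{\alpha}}_t(\mathbf{a},\boldsymbol{\phi})$ for the map $\boldsymbol{\delta}(\boldsymbol{\eta})P(y_1;\boldsymbol{\theta})$ if $t=1$ and $\mathbf{a}\boldsymbol{\Gamma}(\boldsymbol{\eta})P(y_t;\boldsymbol{\theta})$ if $t\ge2$ (so $\widetilde{\boldsymbol{\alpha}}_t(\boldsymbol{\alpha}_{t-1}(\boldsymbol{\phi}),\boldsymbol{\phi})=\boldsymbol{\alpha}_t(\boldsymbol{\phi})$), and analogously $\widetilde{\boldsymbol{\beta}}_t(\mathbf{b},\boldsymbol{\phi})$ equal to $\mathbf{1}$ if $t=T$ and $(\boldsymbol{\Gamma}(\boldsymbol{\eta})P(y_{t+1};\boldsymbol{\theta})\mathbf{b}^\top)^\top$ if $t<T$. Conditional probabilities: $\widetilde{\boldsymbol{\gamma}}_t(\mathbf{a},\mathbf{b})=(\mathbf{a}\circ\mathbf{b})/(\mathbf{a}\mathbf{b}^\top)$ and, for $t\ge2$, $\widetilde{\boldsymbol{\xi}}_t(\mathbf{a}',\mathbf{b},\boldsymbol{\phi})=\mathrm{diag}(\mathbf{a}')\boldsymbol{\Gamma}(\boldsymbol{\eta})P(y_t;\boldsymbol{\theta})\mathrm{diag}(\mathbf{b})\big/\big(\mathbf{a}'\boldsymbol{\Gamma}(\boldsymbol{\eta})P(y_t;\boldsymbol{\theta})\mathbf{b}^\top\big)$; set $\boldsymbol{\gamma}_t(\boldsymbol{\phi})=\widetilde{\boldsymbol{\gamma}}_t(\boldsymbol{\alpha}_t(\boldsymbol{\phi}),\boldsymbol{\beta}_t(\boldsymbol{\phi}))$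 and $\boldsymbol{\xi}_t(\boldsymbol{\phi})=\widetilde{\boldsymbol{\xi}}_t(\boldsymbol{\alpha}_{t-1}(\boldsymbol{\phi}),\boldsymbol{\beta}_t(\boldsymbol{\phi}),\boldsymbol{\phi})$ (these are the smoothed state and transition probabilities); $\boldsymbol{\gamma}(\boldsymbol{\phi}),\boldsymbol{\xi}(\boldsymbol{\phi})$ denote the collections over $t$. Objective: $F_t(\boldsymbol{\phi}\mid\boldsymbol{\gamma}_t,\boldsymbol{\xi}_t)=-\Big[\mathbb{1}\{t=1\}\sum_i\gamma_1(i)\log\delta_i(\boldsymbol{\eta})+\mathbb{1}\{t\ge2\}\sum_{i,j}\xi_t(i,j)\log\Gamma_{ij}(\boldsymbol{\eta})+\sum_i\gamma_t(i)\log f^{(i)}(y_t;\boldsymbol{\theta})\Big]$ and $F(\boldsymbol{\phi}\mid\boldsymbol{\gamma},\boldsymbol{\xi})=\frac1T\sum_{t=1}^TF_t(\boldsymbol{\phi}\mid\boldsymbol{\gamma}_t,\boldsymbol{\xi}_t)$, i.e. $-1/T$ times the EM expected complete-data log-likelihood; gradients are with respect to $\boldsymbol{\phi}$. Procedure $\texttt{VRSO-PE}(\{\widehat{\boldsymbol{\alpha}}^{(0)}_t,\widehat{\boldsymbol{\beta}}^{(0)}_t,\widehat{\boldsymbol{\gamma}}^{(0)}_t,\widehat{\boldsymbol{\xi}}^{(0)}_t\}_{t=1}^T,\boldsymbol{\phi}^{(0)},\lambda,A,P,M)$: initialize gradient tables $\widehat\nabla F^{(0)}_t=\nabla F_t(\boldsymbol{\phi}^{(0)}\mid\widehat{\boldsymbol{\gamma}}^{(0)}_t,\widehat{\boldsymbol{\xi}}^{(0)}_t)$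 and $\widehat\nabla F^{(0)}=\frac1T\sum_t\widehat\nabla F^{(0)}_t$. For $m=0,\ldots,M-1$: draw $t_m$ uniformly from $\{1,\ldots,T\}$. If $P=\texttt{True}$, set $\widehat{\boldsymbol{\alpha}}^{(m+1)}_{t_m}=\widetilde{\boldsymbol{\alpha}}_{t_m}(\widehat{\boldsymbol{\alpha}}^{(m)}_{t_m-1},\boldsymbol{\phi}^{(m)})$, $\widehat{\boldsymbol{\beta}}^{(m+1)}_{t_m}=\widetilde{\boldsymbol{\beta}}_{t_m}(\widehat{\boldsymbol{\beta}}^{(m)}_{t_m+1},\boldsymbol{\phi}^{(m)})$, $\widehat{\boldsymbol{\gamma}}^{(m+1)}_{t_m}=\widetilde{\boldsymbol{\gamma}}_{t_m}(\widehat{\boldsymbol{\alpha}}^{(m+1)}_{t_m},\widehat{\boldsymbol{\beta}}^{(m+1)}_{t_m})$, $\widehat{\boldsymbol{\xi}}^{(m+1)}_{t_m}=\widetilde{\boldsymbol{\xi}}_{t_m}(\widehat{\boldsymbol{\alpha}}^{(m+1)}_{t_m-1},\widehat{\boldsymbol{\beta}}^{(m+1)}_{t_m},\boldsymbol{\phi}^{(m)})$; all other entries (and all entries if $P=\texttt{False}$) are copied unchanged from step $m$. Then $\boldsymbol{\phi}^{(m+1)}=\boldsymbol{\phi}^{(m)}-\lambda\big[\nabla F_{t_m}(\boldsymbol{\phi}^{(m)}\mid\widehat{\boldsymbol{\gamma}}^{(m+1)}_{t_m},\widehat{\boldsymbol{\xi}}^{(m+1)}_{t_m})-\widehat\nabla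 F^{(m)}_{t_m}+\widehat\nabla F^{(m)}\big]$. If $A=\mathrm{SAGA}$: $\widehat\nabla F^{(m+1)}_{t_m}=\nabla F_{t_m}(\boldsymbol{\phi}^{(m)}\mid\widehat{\boldsymbol{\gamma}}^{(m+1)}_{t_m},\widehat{\boldsymbol{\xi}}^{(m+1)}_{t_m})$, $\widehat\nabla F^{(m+1)}=\widehat\nabla F^{(m)}+\frac1T(\widehat\nabla F^{(m+1)}_{t_m}-\widehat\nabla F^{(m)}_{t_m})$, other table entries unchanged; if $A=\mathrm{SVRG}$ the gradient tables are left unchanged. The output is $\boldsymbol{\phi}^{(M)}$. *)

theory Defs
  imports "HOL-Analysis.Analysis" "HOL-Probability.Probability"
begin

text \<open>States are indexed 0..<N, time 1..T.
  Row vectors are functions nat => real (only entries < N matter), matrices nat => nat => real.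
  The parameter is phi = (theta, eta). dl eta i = delta_i(eta), Gm eta i j = Gamma_ij(eta),
  f i y theta = f^(i)(y; theta), y t = observation at time t.\<close>

definition alpha_tl :: "nat \<Rightarrow> ('et \<Rightarrow> nat \<Rightarrow> real) \<Rightarrow> ('et \<Rightarrow> nat \<Rightarrow> nat \<Rightarrow> real)
   \<Rightarrow> (nat \<Rightarrow> 'y \<Rightarrow> 'th \<Rightarrow> real) \<Rightarrow> (nat \<Rightarrow> 'y) \<Rightarrow> nat \<Rightarrow> (nat \<Rightarrow> real) \<Rightarrow> 'th \<times> 'et \<Rightarrow> nat \<Rightarrow> real" where
  "alpha_tl N dl Gm f y t a phi =
     (if t = 1 then (\<lambda>j. dl (snd phi) j * f j (y 1) (fst phi))
      else (\<lambda>j. (\<Sum>i<N. a i * Gm (snd phi) i j) * f j (y t) (fst phi)))"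

fun alpha :: "nat \<Rightarrow> ('et \<Rightarrow> nat \<Rightarrow> real) \<Rightarrow> ('et \<Rightarrow> nat \<Rightarrow> nat \<Rightarrow> real)
   \<Rightarrow> (nat \<Rightarrow> 'y \<Rightarrow> 'th \<Rightarrow> real) \<Rightarrow> (nat \<Rightarrow> 'y) \<Rightarrow> 'th \<times> 'et \<Rightarrow> nat \<Rightarrow> nat \<Rightarrow> real" where
  "alpha N dl Gm f y phi 0 = (\<lambda>_. 0)"
| "alpha N dl Gm f y phi (Suc t) = alpha_tl N dl Gm f y (Suc t) (alpha N dl Gm f y phi t) phi"

definition beta_tl :: "nat \<Rightarrow> nat \<Rightarrow> ('et \<Rightarrow> nat \<Rightarrow> nat \<Rightarrow> real)
   \<Rightarrow> (nat \<Rightarrow> 'y \<Rightarrow> 'th \<Rightarrow> real) \<Rightarrow> (nat \<Rightarrow> 'y) \<Rightarrow> nat \<Rightarrow> (nat \<Rightarrow> real) \<Rightarrow> 'th \<times> 'et \<Rightarrow> nat \<Rightarrow> real" where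
  "beta_tl N T Gm f y t b phi =
     (if t = T then (\<lambda>_. 1)
      else (\<lambda>i. \<Sum>j<N. Gm (snd phi) i j * f j (y (t + 1)) (fst phi) * b j))"

text \<open>betaR k = beta_{T-k}\<close>
fun betaR :: "nat \<Rightarrow> nat \<Rightarrow> ('et \<Rightarrow> nat \<Rightarrow> nat \<Rightarrow> real)
   \<Rightarrow> (nat \<Rightarrow> 'y \<Rightarrow> 'th \<Rightarrow> real) \<Rightarrow> (nat \<Rightarrow> 'y) \<Rightarrow> 'th \<times> 'et \<Rightarrow> nat \<Rightarrow> nat \<Rightarrow> real" where
  "betaR N T Gm f y phi 0 = (\<lambda>_. 1)"
| "betaR N T Gm f y phi (Suc k) = beta_tl N T Gm f y (T - Suc k) (betaR N T Gm f y phi k) phi"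

definition beta :: "nat \<Rightarrow> nat \<Rightarrow> ('et \<Rightarrow> nat \<Rightarrow> nat \<Rightarrow> real)
   \<Rightarrow> (nat \<Rightarrow> 'y \<Rightarrow> 'th \<Rightarrow> real) \<Rightarrow> (nat \<Rightarrow> 'y) \<Rightarrow> 'th \<times> 'et \<Rightarrow> nat \<Rightarrow> nat \<Rightarrow> real" where
  "beta N T Gm f y phi t = betaR N T Gm f y phi (T - t)"

definition gamma_tl :: "nat \<Rightarrow> (nat \<Rightarrow> real) \<Rightarrow> (nat \<Rightarrow> real) \<Rightarrow> nat \<Rightarrow> real" where
  "gamma_tl N a b = (\<lambda>i. a i * b i / (\<Sum>j<N. a j * b j))"

definition xi_tl :: "nat \<Rightarrow> ('et \<Rightarrow> nat \<Rightarrow> nat \<Rightarrow> real)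
   \<Rightarrow> (nat \<Rightarrow> 'y \<Rightarrow> 'th \<Rightarrow> real) \<Rightarrow> (nat \<Rightarrow> 'y) \<Rightarrow> nat \<Rightarrow> (nat \<Rightarrow> real) \<Rightarrow> (nat \<Rightarrow> real)
   \<Rightarrow> 'th \<times> 'et \<Rightarrow> nat \<Rightarrow> nat \<Rightarrow> real" where
  "xi_tl N Gm f y t a' b phi =
     (\<lambda>i j. a' i * Gm (snd phi) i j * f j (y t) (fst phi) * b j /
        (\<Sum>k<N. \<Sum>l<N. a' k * Gm (snd phi) k l * f l (y t) (fst phi) * b l))"

definition gamma where
  "gamma N T dl Gm f y phi t = gamma_tl N (alpha N dl Gm f y phi t) (beta N T Gm f y phi t)"

definition xi where
  "xi N T dl Gm f y phi t = xi_tl N Gm f y t (alpha N dl Gm f y phi (t - 1)) (beta N T Gm f y phi t) phi"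

definition Ft :: "nat \<Rightarrow> ('et \<Rightarrow> nat \<Rightarrow> real) \<Rightarrow> ('et \<Rightarrow> nat \<Rightarrow> nat \<Rightarrow> real)
   \<Rightarrow> (nat \<Rightarrow> 'y \<Rightarrow> 'th \<Rightarrow> real) \<Rightarrow> (nat \<Rightarrow> 'y) \<Rightarrow> nat \<Rightarrow> 'th \<times> 'et
   \<Rightarrow> (nat \<Rightarrow> real) \<Rightarrow> (nat \<Rightarrow> nat \<Rightarrow> real) \<Rightarrow> real" where
  "Ft N dl Gm f y t phi g x =
     - ((if t = 1 then (\<Sum>i<N. g i * ln (dl (snd phi) i)) else 0)
        + (if t \<ge> 2 then (\<Sum>i<N. \<Sum>j<N. x i j * ln (Gm (snd phi) i j)) else 0)
        + (\<Sum>i<N. g i * ln (f i (y t) (fst phi))))"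

definition Fobj where
  "Fobj N T dl Gm f y phi G X = (1 / real T) * (\<Sum>t=1..T. Ft N dl Gm f y t phi (G t) (X t))"

definition grad :: "('p::real_inner \<Rightarrow> real) \<Rightarrow> 'p \<Rightarrow> 'p" where
  "grad h x = (SOME v. (h has_derivative (\<lambda>d. inner v d)) (at x))"

definition gFt where
  "gFt N dl Gm f y t phi g x = grad (\<lambda>psi. Ft N dl Gm f y t psi g x) phi"

datatype alg = SAGA | SVRG

record 'p vstate =
  phi :: 'p
  ah :: "nat \<Rightarrow> nat \<Rightarrow> real"
  bh :: "nat \<Rightarrow> nat \<Rightarrow> real"
  gh :: "nat \<Rightarrow> nat \<Rightarrow> real"
  xh :: "nat \<Rightarrow> nat \<Rightarrow> nat \<Rightarrow> real"
  tab :: "nat \<Rightarrow> 'p"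
  avg :: 'p

definition vrso_init where
  "vrso_init N T dl Gm f y A0 B0 G0 X0 phi0 =
     \<lparr>phi = phi0, ah = A0, bh = B0, gh = G0, xh = X0,
      tab = (\<lambda>t. gFt N dl Gm f y t phi0 (G0 t) (X0 t)),
      avg = (1 / real T) *\<^sub>R (\<Sum>t=1..T. gFt N dl Gm f y t phi0 (G0 t) (X0 t))\<rparr>"

text \<open>One iteration with sampled index tm. (The xi-entry is only refreshed when tm >= 2,
  since xi_1 is undefined and unused by F_1.)\<close>
definition vrso_step where
  "vrso_step N T dl Gm f y lam A P tm s =
     (let ph = phi s;
          a' = (if P then (ah s)(tm := alpha_tl N dl Gm f y tm (ah s (tm - 1)) ph) else ah s);
          b' = (if P then (bh s)(tm := beta_tl N T Gm f y tm (bh s (tm + 1)) ph) else bh s);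
          g' = (if P then (gh s)(tm := gamma_tl N (a' tm) (b' tm)) else gh s);
          x' = (if P \<and> tm \<ge> 2 then (xh s)(tm := xi_tl N Gm f y tm (a' (tm - 1)) (b' tm) ph) else xh s);
          gnew = gFt N dl Gm f y tm ph (g' tm) (x' tm);
          ph' = ph - lam *\<^sub>R (gnew - tab s tm + avg s)
      in if A = SAGA then
           \<lparr>phi = ph', ah = a', bh = b', gh = g', xh = x',
            tab = (tab s)(tm := gnew), avg = avg s + (1 / real T) *\<^sub>R (gnew - tab s tm)\<rparr>
         else
           \<lparr>phi = ph', ah = a', bh = b', gh = g', xh = x', tab = tab s, avg = avg s\<rparr>)"

fun vrso_run where
  "vrso_run N T dl Gm f y A0 B0 G0 X0 phi0 lam A P ts 0 = vrso_init N T dl Gm f y A0 B0 G0 X0 phi0"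
| "vrso_run N T dl Gm f y A0 B0 G0 X0 phi0 lam A P ts (Suc m) =
     vrso_step N T dl Gm f y lam A P (ts m) (vrso_run N T dl Gm f y A0 B0 G0 X0 phi0 lam A P ts m)"

text \<open>VRSO-PE output phi^(M), given the sequence ts of sampled indices t_0, t_1, ...\<close>
definition vrso_pe where
  "vrso_pe N T dl Gm f y A0 B0 G0 X0 phi0 lam A P M ts =
     phi (vrso_run N T dl Gm f y A0 B0 G0 X0 phi0 lam A P ts M)"

end

theory Submission
  imports Defs
begin

text \<open>At a stationary point whose tables are exact, every refresh recomputes exactly the stored
  forward, backward and posterior quantities, because the parameter has not moved. The fresh
  gradient therefore cancels the stored one, and the update reduces to a step along the stored
  average gradient, which is the full gradient of the objective and hence zero. So the state never
  changes, whenever every sampled index lies in \<open>{1..T}\<close>; this holds almost surely.\<close>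

lemma grad_eqI:
  fixes h :: "'p::real_inner \<Rightarrow> real"
  assumes "(h has_derivative (\<lambda>d. v \<bullet> d)) (at x)"
  shows "grad h x = v"
proof -
  have "(h has_derivative (\<lambda>d. grad h x \<bullet> d)) (at x)"
    unfolding grad_def using assms by (rule someI)
  with assms have "(\<lambda>d. v \<bullet> d) = (\<lambda>d. grad h x \<bullet> d)"
    by (rule has_derivative_unique)
  then show ?thesis
    by (metis vector_eq_rdot)
qed

lemma has_derivative_grad:
  fixes h :: "'p::euclidean_space \<Rightarrow> real"
  assumes "h differentiable (at x)"
  shows "(h has_derivative (\<lambda>d. grad h x \<bullet> d)) (at x)"
proof -
  obtain D where D: "(h has_derivative D) (at x)"
    using assms unfolding differentiable_def by blast
  have "D = (\<lambda>d. adjoint D 1 \<bullet> d)"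
    using adjoint_works[OF has_derivative_linear[OF D], of _ 1] by (auto simp: inner_commute)
  with D have "(h has_derivative (\<lambda>d. adjoint D 1 \<bullet> d)) (at x)"
    by simp
  then show ?thesis
    using grad_eqI by metis
qed

lemma differentiable_ln:
  fixes u :: "'a::real_normed_vector \<Rightarrow> real"
  assumes "u differentiable (at p)" "u p > 0"
  shows "(\<lambda>z. ln (u z)) differentiable (at p)"
proof -
  obtain D where "(u has_derivative D) (at p)"
    using assms(1) unfolding differentiable_def by blast
  then have "((\<lambda>z. ln (u z)) has_derivative (\<lambda>h. D h * inverse (u p))) (at p)"
    using assms(2) by (auto intro!: derivative_eq_intros)
  then show ?thesis
    unfolding differentiable_def by blast
qed

lemma Ft_differentiable:
  fixes p :: "'th::real_normed_vector \<times> 'et::real_normed_vector"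
  assumes dl: "\<And>i. i < N \<Longrightarrow> dl (snd p) i > 0"
      "\<And>i. i < N \<Longrightarrow> (\<lambda>e. dl e i) differentiable (at (snd p))"
    and Gm: "\<And>i j. i < N \<Longrightarrow> j < N \<Longrightarrow> Gm (snd p) i j > 0"
      "\<And>i j. i < N \<Longrightarrow> j < N \<Longrightarrow> (\<lambda>e. Gm e i j) differentiable (at (snd p))"
    and f: "\<And>i. i < N \<Longrightarrow> f i (y t) (fst p) > 0"
      "\<And>i. i < N \<Longrightarrow> (\<lambda>h. f i (y t) h) differentiable (at (fst p))"
  shows "(\<lambda>psi. Ft N dl Gm f y t psi g x) differentiable (at p)"
proof -
  have fst_diff: "fst differentiable (at p)" and snd_diff: "snd differentiable (at p)"
    unfolding differentiable_def
    using has_derivative_fst[OF has_derivative_ident] has_derivative_snd[OF has_derivative_ident]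
    by blast+
  have "(\<lambda>psi. ln (dl (snd psi) i)) differentiable (at p)" if "i < N" for i
    using dl that snd_diff by (auto intro!: differentiable_ln differentiable_compose[where g = snd])
  moreover have "(\<lambda>psi. ln (Gm (snd psi) i j)) differentiable (at p)" if "i < N" "j < N" for i j
    using Gm that snd_diff by (auto intro!: differentiable_ln differentiable_compose[where g = snd])
  moreover have "(\<lambda>psi. ln (f i (y t) (fst psi))) differentiable (at p)" if "i < N" for i
    using f that fst_diff by (auto intro!: differentiable_ln differentiable_compose[where g = fst])
  ultimately show ?thesis
    unfolding Ft_def
    by (cases "t = 1"; cases "2 \<le> t")
       (auto intro!: differentiable_minus differentiable_diff differentiable_sum differentiable_mult)
qed

lemma grad_Fobj:
  fixes p :: "'th::euclidean_space \<times> 'et::euclidean_space"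
  assumes "\<And>t. t \<in> {1..T} \<Longrightarrow> (\<lambda>psi. Ft N dl Gm f y t psi (G t) (X t)) differentiable (at p)"
  shows "grad (\<lambda>psi. Fobj N T dl Gm f y psi G X) p
           = (1 / real T) *\<^sub>R (\<Sum>t=1..T. gFt N dl Gm f y t p (G t) (X t))"
proof (rule grad_eqI)
  have "((\<lambda>psi. (1 / real T) * (\<Sum>t=1..T. Ft N dl Gm f y t psi (G t) (X t))) has_derivative
      (\<lambda>d. (1 / real T) * (\<Sum>t=1..T. gFt N dl Gm f y t p (G t) (X t) \<bullet> d))) (at p)"
    unfolding gFt_def using assms
    by (intro has_derivative_mult_right has_derivative_sum has_derivative_grad)
  then show "((\<lambda>psi. Fobj N T dl Gm f y psi G X) has_derivative
      (\<lambda>d. ((1 / real T) *\<^sub>R (\<Sum>t=1..T. gFt N dl Gm f y t p (G t) (X t))) \<bullet> d)) (at p)"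
    unfolding Fobj_def by (simp add: inner_sum_left)
qed

lemma Ft_cong:
  assumes "\<And>i. i < N \<Longrightarrow> g i = g' i"
    and "t \<ge> 2 \<Longrightarrow> (\<And>i j. i < N \<Longrightarrow> j < N \<Longrightarrow> x i j = x' i j)"
  shows "Ft N dl Gm f y t psi g x = Ft N dl Gm f y t psi g' x'"
  unfolding Ft_def using assms by (auto intro!: sum.cong)

lemma gFt_cong:
  assumes "\<And>i. i < N \<Longrightarrow> g i = g' i"
    and "t \<ge> 2 \<Longrightarrow> (\<And>i j. i < N \<Longrightarrow> j < N \<Longrightarrow> x i j = x' i j)"
  shows "gFt N dl Gm f y t p g x = gFt N dl Gm f y t p g' x'"
proof -
  have "(\<lambda>psi. Ft N dl Gm f y t psi g x) = (\<lambda>psi. Ft N dl Gm f y t psi g' x')"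
    by (intro ext Ft_cong) (use assms in auto)
  then show ?thesis
    unfolding gFt_def by simp
qed

lemma alpha_tl_cong:
  assumes "t \<noteq> 1 \<Longrightarrow> (\<And>i. i < N \<Longrightarrow> a i = a' i)"
  shows "alpha_tl N dl Gm f y t a p = alpha_tl N dl Gm f y t a' p"
  unfolding alpha_tl_def using assms by (auto intro!: sum.cong)

lemma beta_tl_cong:
  assumes "t \<noteq> T \<Longrightarrow> (\<And>j. j < N \<Longrightarrow> b j = b' j)"
  shows "beta_tl N T Gm f y t b p = beta_tl N T Gm f y t b' p"
  unfolding beta_tl_def using assms by (auto intro!: sum.cong)

lemma gamma_tl_cong:
  assumes "\<And>i. i < N \<Longrightarrow> a i = a' i" "\<And>i. i < N \<Longrightarrow> b i = b' i" "i < N"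
  shows "gamma_tl N a b i = gamma_tl N a' b' i"
  unfolding gamma_tl_def using assms by (auto intro!: sum.cong)

lemma xi_tl_cong:
  assumes "\<And>i. i < N \<Longrightarrow> a i = a' i" "\<And>i. i < N \<Longrightarrow> b i = b' i" "i < N" "j < N"
  shows "xi_tl N Gm f y t a b p i j = xi_tl N Gm f y t a' b' p i j"
  unfolding xi_tl_def using assms by (auto intro!: sum.cong)

lemma alpha_eq_alpha_tl:
  "t \<ge> 1 \<Longrightarrow> alpha N dl Gm f y p t = alpha_tl N dl Gm f y t (alpha N dl Gm f y p (t - 1)) p"
  by (cases t) auto

lemma beta_eq_beta_tl:
  assumes "t \<le> T"
  shows "beta N T Gm f y p t = beta_tl N T Gm f y t (beta N T Gm f y p (t + 1)) p"
proof (cases "t = T")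
  case True
  then show ?thesis
    by (simp add: beta_def beta_tl_def)
next
  case False
  with assms have "T - t = Suc (T - (t + 1))" and "T - Suc (T - (t + 1)) = t"
    by simp_all
  then show ?thesis
    unfolding beta_def by simp
qed

lemma AE_PiM_measure_pmf_in_set_pmf:
  fixes p :: "'a pmf"
  shows "AE ts in PiM (UNIV :: 'i::countable set) (\<lambda>_. measure_pmf p). \<forall>m. ts m \<in> set_pmf p"
proof -
  have "AE ts in PiM UNIV (\<lambda>_. measure_pmf p). ts m \<in> set_pmf p" for m :: 'i
    by (rule AE_PiM_component) (auto simp: prob_space_measure_pmf AE_measure_pmf_iff)
  then show ?thesis
    by (simp add: AE_all_countable)
qed

context
  fixes N T :: nat
    and dl :: "'et::euclidean_space \<Rightarrow> nat \<Rightarrow> real"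
    and Gm :: "'et \<Rightarrow> nat \<Rightarrow> nat \<Rightarrow> real"
    and f :: "nat \<Rightarrow> 'y \<Rightarrow> 'th::euclidean_space \<Rightarrow> real"
    and y :: "nat \<Rightarrow> 'y"
begin

definition exact_tables :: "'th \<times> 'et \<Rightarrow> (nat \<Rightarrow> nat \<Rightarrow> real) \<Rightarrow> (nat \<Rightarrow> nat \<Rightarrow> real)
    \<Rightarrow> (nat \<Rightarrow> nat \<Rightarrow> real) \<Rightarrow> (nat \<Rightarrow> nat \<Rightarrow> nat \<Rightarrow> real) \<Rightarrow> bool" where
  "exact_tables p a b g x \<longleftrightarrow>
     (\<forall>t\<in>{1..T}. \<forall>i<N. a t i = alpha N dl Gm f y p t i \<and> b t i = beta N T Gm f y p t i
        \<and> g t i = gamma N T dl Gm f y p t i)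
   \<and> (\<forall>t\<in>{2..T}. \<forall>i<N. \<forall>j<N. x t i j = xi N T dl Gm f y p t i j)"

lemma alpha_tl_exact:
  assumes "exact_tables p a b g x" "t \<in> {1..T}"
  shows "alpha_tl N dl Gm f y t (a (t - 1)) p = alpha N dl Gm f y p t"
proof -
  have "alpha_tl N dl Gm f y t (a (t - 1)) p = alpha_tl N dl Gm f y t (alpha N dl Gm f y p (t - 1)) p"
  proof (rule alpha_tl_cong)
    fix i
    assume "t \<noteq> 1" "i < N"
    with assms(2) have "t - 1 \<in> {1..T}"
      by auto
    with assms(1) \<open>i < N\<close> show "a (t - 1) i = alpha N dl Gm f y p (t - 1) i"
      unfolding exact_tables_def by blast
  qed
  also have "\<dots> = alpha N dl Gm f y p t"
    using assms(2) by (simp add: alpha_eq_alpha_tl)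
  finally show ?thesis .
qed

lemma beta_tl_exact:
  assumes "exact_tables p a b g x" "t \<in> {1..T}"
  shows "beta_tl N T Gm f y t (b (t + 1)) p = beta N T Gm f y p t"
proof -
  have "beta_tl N T Gm f y t (b (t + 1)) p = beta_tl N T Gm f y t (beta N T Gm f y p (t + 1)) p"
    by (rule beta_tl_cong) (use assms in \<open>auto simp: exact_tables_def\<close>)
  also have "\<dots> = beta N T Gm f y p t"
    using assms(2) by (simp add: beta_eq_beta_tl)
  finally show ?thesis .
qed

lemma exact_tables_refresh:
  fixes P :: bool
  assumes exact: "exact_tables p a b g x" and tm: "tm \<in> {1..T}"
  defines "a' \<equiv> if P then a(tm := alpha_tl N dl Gm f y tm (a (tm - 1)) p) else a"
    and "b' \<equiv> if P then b(tm := beta_tl N T Gm f y tm (b (tm + 1)) p) else b"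
  defines "g' \<equiv> if P then g(tm := gamma_tl N (a' tm) (b' tm)) else g"
    and "x' \<equiv> if P \<and> tm \<ge> 2 then x(tm := xi_tl N Gm f y tm (a' (tm - 1)) (b' tm) p) else x"
  shows "exact_tables p a' b' g' x'"
proof -
  have a': "\<forall>t\<in>{1..T}. \<forall>i<N. a' t i = alpha N dl Gm f y p t i"
    and b': "\<forall>t\<in>{1..T}. \<forall>i<N. b' t i = beta N T Gm f y p t i"
    using exact alpha_tl_exact[OF exact tm] beta_tl_exact[OF exact tm]
    by (auto simp: a'_def b'_def exact_tables_def)
  have "\<forall>t\<in>{1..T}. \<forall>i<N. g' t i = gamma N T dl Gm f y p t i"
    using exact tm a' b' by (auto simp: g'_def exact_tables_def gamma_def intro: gamma_tl_cong)
  moreover have "\<forall>i<N. a' (tm - 1) i = alpha N dl Gm f y p (tm - 1) i" if "tm \<ge> 2"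
  proof -
    from tm that have "tm - 1 \<in> {1..T}"
      by auto
    with a' show ?thesis
      by blast
  qed
  then have "\<forall>t\<in>{2..T}. \<forall>i<N. \<forall>j<N. x' t i j = xi N T dl Gm f y p t i j"
    using exact tm b' by (auto simp: x'_def exact_tables_def xi_def intro!: xi_tl_cong)
  ultimately show ?thesis
    using a' b' by (simp add: exact_tables_def)
qed

lemma gFt_exact:
  assumes "exact_tables p a b g x" "t \<in> {1..T}"
  shows "gFt N dl Gm f y t p (g t) (x t)
           = gFt N dl Gm f y t p (gamma N T dl Gm f y p t) (xi N T dl Gm f y p t)"
  by (rule gFt_cong) (use assms in \<open>auto simp: exact_tables_def\<close>)

definition stationary_state :: "'th \<times> 'et \<Rightarrow> ('th \<times> 'et) vstate \<Rightarrow> bool" where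
  "stationary_state p s \<longleftrightarrow> phi s = p \<and> avg s = 0 \<and> exact_tables p (ah s) (bh s) (gh s) (xh s)
     \<and> (\<forall>t\<in>{1..T}. tab s t = gFt N dl Gm f y t p (gamma N T dl Gm f y p t) (xi N T dl Gm f y p t))"

lemma stationary_state_init:
  assumes exact: "exact_tables p A0 B0 G0 X0"
    and diff: "\<And>t. t \<in> {1..T} \<Longrightarrow>
      (\<lambda>psi. Ft N dl Gm f y t psi (gamma N T dl Gm f y p t) (xi N T dl Gm f y p t)) differentiable (at p)"
    and critical: "grad (\<lambda>psi. Fobj N T dl Gm f y psi (gamma N T dl Gm f y p) (xi N T dl Gm f y p)) p = 0"
  shows "stationary_state p (vrso_init N T dl Gm f y A0 B0 G0 X0 p)"
proof -
  have "(\<Sum>t=1..T. gFt N dl Gm f y t p (G0 t) (X0 t))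
      = (\<Sum>t=1..T. gFt N dl Gm f y t p (gamma N T dl Gm f y p t) (xi N T dl Gm f y p t))"
    using gFt_exact[OF exact] by simp
  then show ?thesis
    using critical grad_Fobj[OF diff] gFt_exact[OF exact] exact
    by (simp add: stationary_state_def vrso_init_def)
qed

lemma stationary_state_step:
  assumes stat: "stationary_state p s" and tm: "tm \<in> {1..T}"
  shows "stationary_state p (vrso_step N T dl Gm f y lam A P tm s)"
proof -
  have phi: "phi s = p" and exact: "exact_tables p (ah s) (bh s) (gh s) (xh s)"
    using stat by (simp_all add: stationary_state_def)
  define a' where "a' = (if P then (ah s)(tm := alpha_tl N dl Gm f y tm (ah s (tm - 1)) p) else ah s)"
  define b' where "b' = (if P then (bh s)(tm := beta_tl N T Gm f y tm (bh s (tm + 1)) p) else bh s)"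
  define g' where "g' = (if P then (gh s)(tm := gamma_tl N (a' tm) (b' tm)) else gh s)"
  define x' where "x' = (if P \<and> tm \<ge> 2 then (xh s)(tm := xi_tl N Gm f y tm (a' (tm - 1)) (b' tm) p) else xh s)"
  have exact': "exact_tables p a' b' g' x'"
    unfolding a'_def b'_def g'_def x'_def using exact tm by (rule exact_tables_refresh)
  have fresh_grad: "gFt N dl Gm f y tm p (g' tm) (x' tm) = tab s tm"
    using gFt_exact[OF exact' tm] stat tm by (simp add: stationary_state_def)
  show ?thesis
    unfolding vrso_step_def Let_def phi a'_def[symmetric] b'_def[symmetric] g'_def[symmetric]
      x'_def[symmetric] fresh_grad
    using stat exact' by (simp add: stationary_state_def)
qed

lemma stationary_state_run:
  assumes "stationary_state p (vrso_init N T dl Gm f y A0 B0 G0 X0 p)" "\<forall>m. ts m \<in> {1..T}"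
  shows "stationary_state p (vrso_run N T dl Gm f y A0 B0 G0 X0 p lam A P ts M)"
  by (induction M) (use assms stationary_state_step in auto)

end

theorem lemma6:
  fixes N T :: nat
    and y :: "nat \<Rightarrow> 'y"
    and dl :: "'et::euclidean_space \<Rightarrow> nat \<Rightarrow> real"
    and Gm :: "'et \<Rightarrow> nat \<Rightarrow> nat \<Rightarrow> real"
    and f :: "nat \<Rightarrow> 'y \<Rightarrow> 'th::euclidean_space \<Rightarrow> real"
    and Phi :: "('th \<times> 'et) set"
    and phi0 :: "'th \<times> 'et"
    and A0 B0 G0 :: "nat \<Rightarrow> nat \<Rightarrow> real"
    and X0 :: "nat \<Rightarrow> nat \<Rightarrow> nat \<Rightarrow> real"
  assumes N: "N \<ge> 1" and T: "T \<ge> 1"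
    and Phi_open: "open Phi" and phi0_in: "phi0 \<in> Phi"
    and dl_pos: "\<And>th et i. (th, et) \<in> Phi \<Longrightarrow> i < N \<Longrightarrow> dl et i > 0"
    and dl_sum: "\<And>th et. (th, et) \<in> Phi \<Longrightarrow> (\<Sum>i<N. dl et i) = 1"
    and Gm_pos: "\<And>th et i j. (th, et) \<in> Phi \<Longrightarrow> i < N \<Longrightarrow> j < N \<Longrightarrow> Gm et i j > 0"
    and Gm_sum: "\<And>th et i. (th, et) \<in> Phi \<Longrightarrow> i < N \<Longrightarrow> (\<Sum>j<N. Gm et i j) = 1"
    and f_pos: "\<And>th et i yy. (th, et) \<in> Phi \<Longrightarrow> i < N \<Longrightarrow> f i yy th > 0"
    and dl_diff: "\<And>th et i. (th, et) \<in> Phi \<Longrightarrow> i < N \<Longrightarrow> (\<lambda>e. dl e i) differentiable (at et)"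
    and Gm_diff: "\<And>th et i j. (th, et) \<in> Phi \<Longrightarrow> i < N \<Longrightarrow> j < N \<Longrightarrow>
                    (\<lambda>e. Gm e i j) differentiable (at et)"
    and f_diff: "\<And>th et i yy. (th, et) \<in> Phi \<Longrightarrow> i < N \<Longrightarrow> (\<lambda>h. f i yy h) differentiable (at th)"
    and h1: "\<And>t i. t \<in> {1..T} \<Longrightarrow> i < N \<Longrightarrow>
               A0 t i = alpha N dl Gm f y phi0 t i \<and> B0 t i = beta N T Gm f y phi0 t i"
    and h2: "\<And>t i. t \<in> {1..T} \<Longrightarrow> i < N \<Longrightarrow> G0 t i = gamma N T dl Gm f y phi0 t i"
    and h2': "\<And>t i j. t \<in> {2..T} \<Longrightarrow> i < N \<Longrightarrow> j < N \<Longrightarrow> X0 t i j = xi N T dl Gm f y phi0 t i j"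
    and h3: "grad (\<lambda>ph. Fobj N T dl Gm f y ph (gamma N T dl Gm f y phi0) (xi N T dl Gm f y phi0)) phi0 = 0"
  shows "AE ts in PiM UNIV (\<lambda>_. measure_pmf (pmf_of_set {1..T})).
           \<forall>lam A P M. vrso_pe N T dl Gm f y A0 B0 G0 X0 phi0 lam A P M ts = phi0"
proof -
  have exact: "exact_tables N T dl Gm f y phi0 A0 B0 G0 X0"
    using h1 h2 h2' by (simp add: exact_tables_def)
  obtain th0 et0 where "phi0 = (th0, et0)" and "(th0, et0) \<in> Phi"
    using phi0_in by (cases phi0) auto
  then have "(\<lambda>psi. Ft N dl Gm f y t psi (gamma N T dl Gm f y phi0 t) (xi N T dl Gm f y phi0 t))
      differentiable (at phi0)" for t
    by (auto intro!: Ft_differentiable dl_pos dl_diff Gm_pos Gm_diff f_pos f_diff)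
  then have init: "stationary_state N T dl Gm f y phi0 (vrso_init N T dl Gm f y A0 B0 G0 X0 phi0)"
    by (intro stationary_state_init exact h3)
  have "set_pmf (pmf_of_set {1..T}) = {1..T}"
    using T by simp
  then have "AE ts in PiM UNIV (\<lambda>_. measure_pmf (pmf_of_set {1..T})). \<forall>m::nat. ts m \<in> {1..T}"
    using AE_PiM_measure_pmf_in_set_pmf[of "pmf_of_set {1..T}"] by simp
  then show ?thesis
    by (rule eventually_mono)
      (use stationary_state_run[OF init] in \<open>auto simp: vrso_pe_def stationary_state_def\<close>)
qed

end
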